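(* Let $M$ be an $n\times n$ complex Hadamard matrix. Let $\Gamma$ be the group of all $n\times n$ complex monomial matrices $P$ with $PMP^\ast=M$, let $\pi\colon\Gamma\to\mathrm{Sym}_n$ send a monomial matrix to its underlying permutation, let $G=\pi(\Gamma)$, and assume $G$ is transitive. Let $\Gamma_{\rm f}=\{L\in\Gamma : \det(L)=1\}$. Then the restriction of $\pi$ to $\Gamma_{\rm f}$ is a surjection $\Gamma_{\rm f}\to G$ whose kernel is the cyclic central subgroup $\langle\zeta_nI_n\rangle$, where $\zeta_n$ is a primitive complex $n$-th root of unity; in particular $|\Gamma_{\rm f}|=n|G|$ is finite. Moreover, $M\in\mathrm{C}(\Gamma)$ and $\mathrm{C}(\Gamma)=\mathrm{C}(\Gamma_{\rm f})$.
   Context: A complex Hadamard matrix of order $n$ has all entries of norm $1$ and satisfies $MM^\ast=nI_n$. A monomial matrix has exactly one nonzero entry in each row and column; it factors as $PD$ with $P$ a permutation matrix and $D$ diagonal, and $\pi$ maps it to $P$. For a matrix group $K$, $\mathrm{C}(K)$ denotes the set of matrices commuting with every element of $K$. ($\Gamma$ is the projection onto the first coordinate of the strong automorphism group $\{(P,P) : PMP^\ast=M\}$ of $M$.) *)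

theory Defs
  imports "HOL-Analysis.Analysis"
begin

text \<open>Square complex matrices of order n = CARD('n), as elements of complex^'n^'n.\<close>

definition conj_transpose :: "complex^'n^'m \<Rightarrow> complex^'m^'n" where
  "conj_transpose A = (\<chi> i j. cnj (A $ j $ i))"

definition complex_hadamard :: "complex^'n^'n \<Rightarrow> bool" where
  "complex_hadamard M \<longleftrightarrow> (\<forall>i j. norm (M $ i $ j) = 1) \<and>
     M ** conj_transpose M = mat (of_nat CARD('n))"

definition monomial_matrix :: "complex^'n^'n \<Rightarrow> bool" where
  "monomial_matrix P \<longleftrightarrow> (\<forall>i. \<exists>!j. P $ i $ j \<noteq> 0) \<and> (\<forall>j. \<exists>!i. P $ i $ j \<noteq> 0)"

text \<open>The underlying permutation: P = (perm matrix of sigma) * D, where the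
  permutation matrix of sigma sends e_j to e_(sigma j); so sigma j is the row of
  the nonzero entry in column j.\<close>
definition perm_of :: "complex^'n^'n \<Rightarrow> ('n \<Rightarrow> 'n)" where
  "perm_of P = (\<lambda>j. THE i. P $ i $ j \<noteq> 0)"

definition aut_group :: "complex^'n^'n \<Rightarrow> (complex^'n^'n) set" where
  "aut_group M = {P. monomial_matrix P \<and> P ** M ** conj_transpose P = M}"

definition centralizer :: "(complex^'n^'n) set \<Rightarrow> (complex^'n^'n) set" where
  "centralizer K = {A. \<forall>B\<in>K. A ** B = B ** A}"

definition primitive_root_of_unity :: "nat \<Rightarrow> complex \<Rightarrow> bool" where
  "primitive_root_of_unity n z \<longleftrightarrow> z ^ n = 1 \<and> (\<forall>k. 0 < k \<and> k < n \<longrightarrow> z ^ k \<noteq> 1)"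

end

theory Submission
  imports Defs
begin

(* An automorphism P of M is monomial, and comparing entries of P M P* = M gives
   M i j = p i * M (r i) (r j) * cnj (p j), where p i is the nonzero entry of row i of P and
   r i its column.  All entries of M have modulus 1, so the diagonal forces |p i| = 1: P is
   unitary and therefore commutes with M.  For two automorphisms with the same permutation
   the same identity gives p i * cnj (p j) = p' i * cnj (p' j) for all i, j, so they differ by a
   unit scalar.  Scaling by an n-th root of 1 / det P moves any automorphism into Gamma_f without
   changing its permutation, hence every fibre of pi on Gamma_f is a coset of the n-th roots of
   unity times I. *)

lemma mat_component: "(mat c :: 'a::zero^'n^'n) $ i $ j = (if i = j then c else 0)"
  by (simp add: mat_def)

lemma mat_mult_component: "(mat c ** A) $ i $ j = c * A $ i $ j"
  for A :: "'a::semiring_1^'m^'n"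
  by (simp add: matrix_matrix_mult_def mat_def if_distrib if_distribR cong: if_cong)

lemma mult_mat_component: "(A ** mat c) $ i $ j = A $ i $ j * c"
  for A :: "'a::semiring_1^'m^'n"
  by (simp add: matrix_matrix_mult_def mat_def if_distrib if_distribR cong: if_cong)

lemma mat_mult_commute: "mat c ** A = A ** mat c"
  for A :: "'a::comm_semiring_1^'n^'n"
  by (simp add: vec_eq_iff mat_mult_component mult_mat_component mult.commute)

lemma mat_mult_mat: "mat c ** mat d = (mat (c * d) :: 'a::semiring_1^'n^'n)"
  by (simp add: vec_eq_iff mat_mult_component mat_component)

lemma inj_mat_mult:
  fixes A :: "'a::idom^'m^'n"
  assumes "A \<noteq> 0"
  shows "inj (\<lambda>c. mat c ** A)"
proof (rule injI)
  fix c d assume eq: "mat c ** A = mat d ** A"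
  obtain i j where "A $ i $ j \<noteq> 0" using assms by (auto simp: vec_eq_iff)
  moreover have "c * A $ i $ j = d * A $ i $ j" using eq by (metis mat_mult_component)
  ultimately show "c = d" by simp
qed

lemma det_mat: "det (mat c :: 'a::comm_ring_1^'n^'n) = c ^ CARD('n)"
  by (subst det_diagonal) (auto simp: mat_component)

lemma det_mat_mult: "det (mat c ** A) = c ^ CARD('n) * det (A :: 'a::comm_ring_1^'n^'n)"
  by (simp add: det_mul det_mat)

lemma conj_transpose_component: "conj_transpose A $ i $ j = cnj (A $ j $ i)"
  by (simp add: conj_transpose_def)

lemma conj_transpose_mat: "conj_transpose (mat c :: complex^'n^'n) = mat (cnj c)"
  by (simp add: vec_eq_iff conj_transpose_component mat_component)

lemma conj_transpose_mat_mult: "conj_transpose (mat c ** A) = conj_transpose A ** mat (cnj c)"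
  for A :: "complex^'n^'m"
  by (simp add: vec_eq_iff conj_transpose_component mat_mult_component mult_mat_component
      mult.commute)

lemma det_conj_transpose: "det (conj_transpose A) = cnj (det (A :: complex^'n^'n))"
proof -
  have "conj_transpose A = transpose (\<chi> i j. cnj (A $ i $ j))"
    by (simp add: vec_eq_iff conj_transpose_component transpose_def)
  then have "det (conj_transpose A) = det (\<chi> i j. cnj (A $ i $ j))" by simp
  also have "\<dots> = cnj (det A)" unfolding det_def by simp
  finally show ?thesis .
qed

lemma primitive_root_of_unity_powers:
  fixes \<zeta> :: complex
  assumes prim: "primitive_root_of_unity n \<zeta>" and "0 < n"
  shows "range (\<lambda>k. \<zeta> ^ k) = {z. z ^ n = 1}"
proof -
  have \<zeta>0: "\<zeta> \<noteq> 0" using prim \<open>0 < n\<close> by (auto simp: primitive_root_of_unity_def power_0_left)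
  have root: "(\<zeta> ^ k) ^ n = 1" for k
  proof -
    have "(\<zeta> ^ k) ^ n = (\<zeta> ^ n) ^ k" by (simp flip: power_mult add: mult.commute)
    then show ?thesis using prim by (simp add: primitive_root_of_unity_def)
  qed
  have eq_if_le: "a = b" if "a \<le> b" "b < n" "\<zeta> ^ a = \<zeta> ^ b" for a b
  proof -
    have "\<zeta> ^ b = \<zeta> ^ a * \<zeta> ^ (b - a)" using \<open>a \<le> b\<close> by (simp flip: power_add)
    then have "\<zeta> ^ (b - a) = 1" using \<zeta>0 \<open>\<zeta> ^ a = \<zeta> ^ b\<close> by simp
    moreover have "0 < b - a \<and> b - a < n" if "a \<noteq> b" using that \<open>a \<le> b\<close> \<open>b < n\<close> by auto
    ultimately show "a = b" using prim unfolding primitive_root_of_unity_def by blast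
  qed
  have "inj_on (\<lambda>k. \<zeta> ^ k) {..<n}"
    by (rule inj_onI) (metis eq_if_le lessThan_iff nat_le_linear)
  then have "card ((\<lambda>k. \<zeta> ^ k) ` {..<n}) = card {z::complex. z ^ n = 1}"
    using card_roots_unity_eq[OF \<open>0 < n\<close>] by (simp add: card_image)
  then have "(\<lambda>k. \<zeta> ^ k) ` {..<n} = {z. z ^ n = 1}"
    using root \<open>0 < n\<close> by (intro card_subset_eq finite_roots_unity) auto
  then show ?thesis using root by blast
qed

lemma card_by_constant_fibres:
  assumes "finite (f ` A)"
    and "\<And>a. a \<in> A \<Longrightarrow> finite {x \<in> A. f x = f a} \<and> card {x \<in> A. f x = f a} = k"
  shows "finite A \<and> card A = k * card (f ` A)"
proof -
  have A: "A = (\<Union>b\<in>f ` A. {x \<in> A. f x = b})" by auto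
  have "finite A" using assms by (subst A, intro finite_UN_I) auto
  moreover have "card A = (\<Sum>b\<in>f ` A. card {x \<in> A. f x = b})"
    using assms by (subst A, intro card_UN_disjoint) auto
  moreover have "\<dots> = (\<Sum>b\<in>f ` A. k)" using assms(2) by (intro sum.cong) auto
  ultimately show ?thesis by simp
qed

definition nonzero_col :: "complex^'n^'n \<Rightarrow> 'n \<Rightarrow> 'n" where
  "nonzero_col P i = (THE j. P $ i $ j \<noteq> 0)"

lemma nonzero_col_iff:
  assumes "monomial_matrix P"
  shows "P $ i $ j \<noteq> 0 \<longleftrightarrow> j = nonzero_col P i"
proof -
  have ex1: "\<exists>!j. P $ i $ j \<noteq> 0" using assms by (simp add: monomial_matrix_def)
  then have "P $ i $ nonzero_col P i \<noteq> 0" unfolding nonzero_col_def by (rule theI')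
  with ex1 show ?thesis by blast
qed

lemma perm_of_iff:
  assumes "monomial_matrix P"
  shows "P $ i $ j \<noteq> 0 \<longleftrightarrow> i = perm_of P j"
proof -
  have ex1: "\<exists>!i. P $ i $ j \<noteq> 0" using assms by (simp add: monomial_matrix_def)
  then have "P $ perm_of P j $ j \<noteq> 0" unfolding perm_of_def by (rule theI')
  with ex1 show ?thesis by blast
qed

lemma perm_of_nonzero_col: "monomial_matrix P \<Longrightarrow> perm_of P (nonzero_col P i) = i"
  by (metis nonzero_col_iff perm_of_iff)

lemma nonzero_col_eq_if_perm_of_eq:
  assumes "monomial_matrix P" "monomial_matrix Q" "perm_of P = perm_of Q"
  shows "nonzero_col P = nonzero_col Q"
  using assms by (metis nonzero_col_iff perm_of_iff ext)

lemma monomial_mult_component: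
  assumes "monomial_matrix P"
  shows "(P ** A) $ i $ j = P $ i $ nonzero_col P i * A $ nonzero_col P i $ j"
proof -
  have "(P ** A) $ i $ j = (\<Sum>k\<in>UNIV. P $ i $ k * A $ k $ j)"
    by (simp add: matrix_matrix_mult_def)
  also have "\<dots> = (\<Sum>k\<in>UNIV. if k = nonzero_col P i then P $ i $ k * A $ k $ j else 0)"
    by (rule sum.cong) (use nonzero_col_iff[OF assms] in auto)
  finally show ?thesis by simp
qed

lemma mult_conj_transpose_monomial_component:
  assumes "monomial_matrix P"
  shows "(A ** conj_transpose P) $ i $ j = A $ i $ nonzero_col P j * cnj (P $ j $ nonzero_col P j)"
proof -
  have "(A ** conj_transpose P) $ i $ j = (\<Sum>k\<in>UNIV. A $ i $ k * cnj (P $ j $ k))"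
    by (simp add: matrix_matrix_mult_def conj_transpose_component)
  also have "\<dots> = (\<Sum>k\<in>UNIV. if k = nonzero_col P j then A $ i $ k * cnj (P $ j $ k) else 0)"
    by (rule sum.cong) (use nonzero_col_iff[OF assms] in auto)
  finally show ?thesis by simp
qed

lemma monomial_matrix_mat_mult: "c \<noteq> 0 \<Longrightarrow> monomial_matrix (mat c ** P) \<longleftrightarrow> monomial_matrix P"
  by (simp add: monomial_matrix_def mat_mult_component)

lemma perm_of_mat_mult: "c \<noteq> 0 \<Longrightarrow> perm_of (mat c ** P) = perm_of P"
  by (simp add: perm_of_def mat_mult_component)

lemma monomial_matrix_mat_one: "monomial_matrix (mat 1 :: complex^'n^'n)"
  by (simp add: monomial_matrix_def mat_component)

lemma perm_of_mat_one: "perm_of (mat 1 :: complex^'n^'n) = id"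
  by (simp add: perm_of_def mat_component fun_eq_iff)

lemma aut_group_component:
  assumes "P \<in> aut_group M"
  shows "M $ i $ j = P $ i $ nonzero_col P i * M $ nonzero_col P i $ nonzero_col P j
                     * cnj (P $ j $ nonzero_col P j)"
proof -
  have "monomial_matrix P" "P ** M ** conj_transpose P = M"
    using assms by (auto simp: aut_group_def)
  then show ?thesis
    by (metis monomial_mult_component mult_conj_transpose_monomial_component)
qed

lemma norm_aut_group_entry:
  assumes "complex_hadamard M" "P \<in> aut_group M"
  shows "norm (P $ i $ nonzero_col P i) = 1"
proof -
  have "norm (M $ i $ i)
      = norm (P $ i $ nonzero_col P i) ^ 2 * norm (M $ nonzero_col P i $ nonzero_col P i)"
    by (subst aut_group_component[OF assms(2)]) (simp add: norm_mult power2_eq_square)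
  then have "norm (P $ i $ nonzero_col P i) ^ 2 = 1"
    using assms(1) by (simp add: complex_hadamard_def)
  then show ?thesis by (metis norm_ge_zero power2_eq_1_iff neg_0_le_iff_le not_one_le_zero)
qed

lemma aut_group_unitary:
  assumes "complex_hadamard M" "P \<in> aut_group M"
  shows "P ** conj_transpose P = mat 1"
proof -
  have P: "monomial_matrix P" using assms(2) by (simp add: aut_group_def)
  have "(P ** conj_transpose P) $ i $ j = mat 1 $ i $ j" for i j
  proof (cases "i = j")
    case True
    then show ?thesis
      using norm_aut_group_entry[OF assms, of j] complex_norm_square[of "P $ j $ nonzero_col P j"]
      by (simp add: mult_conj_transpose_monomial_component[OF P] mat_component)
  next
    case False
    then have "P $ i $ nonzero_col P j = 0"
      by (metis P nonzero_col_iff perm_of_nonzero_col)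
    then show ?thesis
      using False by (simp add: mult_conj_transpose_monomial_component[OF P] mat_component)
  qed
  then show ?thesis by (simp add: vec_eq_iff)
qed

lemma aut_group_commute:
  assumes "complex_hadamard M" "P \<in> aut_group M"
  shows "P ** M = M ** P"
proof -
  have "conj_transpose P ** P = mat 1"
    using aut_group_unitary[OF assms] matrix_left_right_inverse by blast
  then have "P ** M = P ** M ** conj_transpose P ** P"
    by (simp flip: matrix_mul_assoc)
  also have "\<dots> = M ** P" using assms(2) by (simp add: aut_group_def)
  finally show ?thesis .
qed

lemma norm_det_aut_group:
  assumes "complex_hadamard M" "P \<in> aut_group M"
  shows "norm (det P) = 1"
proof -
  have "det P * cnj (det P) = 1"
    using arg_cong[OF aut_group_unitary[OF assms], of det] by (simp add: det_mul det_conj_transpose)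
  then have "norm (det P) ^ 2 = 1"
    by (metis complex_norm_square of_real_eq_1_iff)
  then show ?thesis by (metis norm_ge_zero power2_eq_1_iff neg_0_le_iff_le not_one_le_zero)
qed

lemma mat_one_in_aut_group: "mat 1 \<in> aut_group M"
  by (simp add: aut_group_def monomial_matrix_mat_one conj_transpose_mat)

lemma mat_mult_in_aut_group:
  assumes "P \<in> aut_group M" "norm c = 1"
  shows "mat c ** P \<in> aut_group M"
proof -
  have "c * cnj c = 1" using assms(2) complex_norm_square[of c] by simp
  then have "mat c ** M ** mat (cnj c) = M"
    by (simp add: vec_eq_iff mat_mult_component mult_mat_component ac_simps)
  moreover have "mat c ** P ** M ** conj_transpose (mat c ** P)
      = mat c ** (P ** M ** conj_transpose P) ** mat (cnj c)"
    by (simp add: conj_transpose_mat_mult matrix_mul_assoc)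
  moreover have "c \<noteq> 0" using assms(2) by auto
  ultimately show ?thesis
    using assms(1) by (simp add: aut_group_def monomial_matrix_mat_mult)
qed

lemma aut_group_perm_of_eq_imp_scalar:
  assumes M: "complex_hadamard M" and L: "L \<in> aut_group M" and K: "K \<in> aut_group M"
    and perm: "perm_of L = perm_of K"
  shows "\<exists>c. norm c = 1 \<and> L = mat c ** K"
proof -
  have mono: "monomial_matrix L" "monomial_matrix K" using L K by (auto simp: aut_group_def)
  define r where "r = nonzero_col K"
  have r: "nonzero_col L = r"
    unfolding r_def using mono perm by (rule nonzero_col_eq_if_perm_of_eq)
  define l k where "l i = L $ i $ r i" and "k i = K $ i $ r i" for i
  have nl: "norm (l i) = 1" and nk: "norm (k i) = 1" for i
    using norm_aut_group_entry[OF M L, of i] norm_aut_group_entry[OF M K, of i] r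
    by (simp_all add: l_def k_def r_def)
  have lk: "l i * cnj (l j) = k i * cnj (k j)" for i j
  proof -
    have "norm (M $ r i $ r j) = 1" using M by (simp add: complex_hadamard_def)
    then have "M $ r i $ r j \<noteq> 0" by auto
    moreover have "l i * cnj (l j) * M $ r i $ r j = M $ i $ j"
      using aut_group_component[OF L, of i j] r by (simp add: l_def r_def ac_simps)
    moreover have "k i * cnj (k j) * M $ r i $ r j = M $ i $ j"
      using aut_group_component[OF K, of i j] by (simp add: k_def r_def ac_simps)
    ultimately show ?thesis by (metis mult_right_cancel)
  qed
  obtain i0 :: 'a where True by blast
  define c where "c = l i0 * cnj (k i0)"
  have "l i = c * k i" for i
  proof -
    have "l i = l i * cnj (l i0) * l i0"
      using nl[of i0] complex_norm_square[of "l i0"] by (simp add: ac_simps)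
    also have "\<dots> = k i * cnj (k i0) * l i0" by (simp add: lk)
    finally show ?thesis by (simp add: c_def ac_simps)
  qed
  then have "L $ i $ j = (mat c ** K) $ i $ j" for i j
    using nonzero_col_iff[OF mono(1), of i j] nonzero_col_iff[OF mono(2), of i j] r
    by (cases "j = r i") (auto simp: mat_mult_component l_def k_def r_def)
  moreover have "norm c = 1" using nl nk by (simp add: c_def norm_mult)
  ultimately show ?thesis by (auto simp: vec_eq_iff)
qed

lemma ex_unit_scalar_det_one:
  fixes P :: "complex^'n^'n"
  assumes "norm (det P) = 1"
  shows "\<exists>c. norm c = 1 \<and> det (mat c ** P) = 1"
proof -
  have "det P \<noteq> 0" using assms by auto
  then have "card {c::complex. c ^ CARD('n) = inverse (det P)} = CARD('n)"
    by (intro card_nth_roots) auto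
  then obtain c :: complex where c: "c ^ CARD('n) = inverse (det P)"
    by (metis (mono_tags, lifting) card.empty empty_Collect_eq zero_less_card_finite less_irrefl)
  have "norm c ^ CARD('n) = norm (inverse (det P))" by (simp add: norm_power flip: c)
  also have "\<dots> = 1" using assms by (simp add: norm_inverse)
  finally have "norm c = 1" using power_eq_1_iff[of "norm c" "CARD('n)"] by simp
  moreover have "det (mat c ** P) = 1" using c \<open>det P \<noteq> 0\<close> by (simp add: det_mat_mult)
  ultimately show ?thesis by blast
qed

definition special_aut_group :: "complex^'n^'n \<Rightarrow> (complex^'n^'n) set" where
  "special_aut_group M = {L \<in> aut_group M. det L = 1}"

lemma aut_group_eq_scalar_mult_special:
  assumes "complex_hadamard M" "P \<in> aut_group M"
  shows "\<exists>c L. c \<noteq> 0 \<and> L \<in> special_aut_group M \<and> P = mat c ** L"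
proof -
  obtain d where d: "norm d = 1" "det (mat d ** P) = 1"
    using ex_unit_scalar_det_one norm_det_aut_group[OF assms] by blast
  then have "d \<noteq> 0" by auto
  have "mat d ** P \<in> special_aut_group M"
    using d mat_mult_in_aut_group[OF assms(2)] by (simp add: special_aut_group_def)
  moreover have "P = mat (inverse d) ** (mat d ** P)"
    using \<open>d \<noteq> 0\<close> by (simp add: matrix_mul_assoc mat_mult_mat)
  moreover have "inverse d \<noteq> 0" using \<open>d \<noteq> 0\<close> by simp
  ultimately show ?thesis by blast
qed

lemma perm_of_special_aut_group:
  assumes "complex_hadamard M"
  shows "perm_of ` special_aut_group M = perm_of ` aut_group M"
proof
  show "perm_of ` special_aut_group M \<subseteq> perm_of ` aut_group M"
    by (auto simp: special_aut_group_def)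
  show "perm_of ` aut_group M \<subseteq> perm_of ` special_aut_group M"
    using aut_group_eq_scalar_mult_special[OF assms] perm_of_mat_mult by fastforce
qed

lemma special_aut_group_fibre:
  fixes M :: "complex^'n^'n"
  assumes M: "complex_hadamard M" and K: "K \<in> special_aut_group M"
  shows "{L \<in> special_aut_group M. perm_of L = perm_of K}
    = (\<lambda>c. mat c ** K) ` {c. c ^ CARD('n) = 1}"
proof (intro equalityI subsetI)
  fix L assume "L \<in> {L \<in> special_aut_group M. perm_of L = perm_of K}"
  then obtain c where "L = mat c ** K" "det L = 1"
    using aut_group_perm_of_eq_imp_scalar[OF M] K by (auto simp: special_aut_group_def)
  moreover have "det K = 1" using K by (simp add: special_aut_group_def)
  ultimately show "L \<in> (\<lambda>c. mat c ** K) ` {c. c ^ CARD('n) = 1}"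
    by (simp add: det_mat_mult)
next
  fix L assume "L \<in> (\<lambda>c. mat c ** K) ` {c. c ^ CARD('n) = 1}"
  then obtain c where c: "c ^ CARD('n) = 1" and L: "L = mat c ** K" by blast
  then have "norm c = 1" using power_eq_1_iff[of c "CARD('n)"] by simp
  then have "c \<noteq> 0" "mat c ** K \<in> aut_group M"
    using K mat_mult_in_aut_group by (auto simp: special_aut_group_def)
  then show "L \<in> {L \<in> special_aut_group M. perm_of L = perm_of K}"
    using K c by (simp add: L special_aut_group_def det_mat_mult perm_of_mat_mult)
qed

lemma card_special_aut_group_fibre:
  fixes M :: "complex^'n^'n"
  assumes "complex_hadamard M" "K \<in> special_aut_group M"
  shows "finite {L \<in> special_aut_group M. perm_of L = perm_of K}"
    and "card {L \<in> special_aut_group M. perm_of L = perm_of K} = CARD('n)"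
proof -
  have "det K = 1" using assms(2) by (simp add: special_aut_group_def)
  then have "K \<noteq> 0" by (metis det_0 mat_0 zero_neq_one)
  then have "inj_on (\<lambda>c. mat c ** K) {c. c ^ CARD('n) = 1}"
    by (metis inj_mat_mult inj_on_subset subset_UNIV)
  then show "finite {L \<in> special_aut_group M. perm_of L = perm_of K}"
    and "card {L \<in> special_aut_group M. perm_of L = perm_of K} = CARD('n)"
    by (simp_all add: special_aut_group_fibre[OF assms] card_image card_roots_unity_eq
        finite_roots_unity)
qed

lemma special_aut_group_kernel:
  fixes M :: "complex^'n^'n"
  assumes "complex_hadamard M"
  shows "{L \<in> special_aut_group M. perm_of L = id} = mat ` {c. c ^ CARD('n) = 1}"
proof -
  have "mat 1 \<in> special_aut_group M"
    by (simp add: special_aut_group_def mat_one_in_aut_group)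
  from special_aut_group_fibre[OF assms this] show ?thesis
    by (simp add: perm_of_mat_one image_image)
qed

lemma centralizer_special_aut_group:
  assumes "complex_hadamard M"
  shows "centralizer (special_aut_group M) = centralizer (aut_group M)"
proof
  show "centralizer (aut_group M) \<subseteq> centralizer (special_aut_group M)"
    by (auto simp: centralizer_def special_aut_group_def)
  show "centralizer (special_aut_group M) \<subseteq> centralizer (aut_group M)"
  proof (clarsimp simp: centralizer_def)
    fix A P assume A: "\<forall>L\<in>special_aut_group M. A ** L = L ** A" and "P \<in> aut_group M"
    then obtain c L where "L \<in> special_aut_group M" "P = mat c ** L"
      using aut_group_eq_scalar_mult_special[OF assms] by blast
    then show "A ** P = P ** A"
      using A by (metis mat_mult_commute matrix_mul_assoc)
  qed
qed

theorem proposition6p1: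
  fixes M :: "complex^'n^'n"
  defines "\<Gamma> \<equiv> aut_group M"
  defines "G \<equiv> perm_of ` \<Gamma>"
  defines "\<Gamma>f \<equiv> {L \<in> \<Gamma>. det L = 1}"
  assumes hadamard: "complex_hadamard M"
    and transitive: "\<forall>i j. \<exists>\<sigma>\<in>G. \<sigma> i = j"
  shows "perm_of ` \<Gamma>f = G
    \<and> (\<forall>\<zeta>. primitive_root_of_unity CARD('n) \<zeta> \<longrightarrow>
          {L \<in> \<Gamma>f. perm_of L = id} = {mat (\<zeta> ^ k) | k::nat. True})
    \<and> (\<forall>L\<in>\<Gamma>f. \<forall>K\<in>\<Gamma>f. perm_of L = id \<longrightarrow> L ** K = K ** L)
    \<and> finite \<Gamma>f \<and> card \<Gamma>f = CARD('n) * card G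
    \<and> M \<in> centralizer \<Gamma> \<and> centralizer \<Gamma> = centralizer \<Gamma>f"
proof -
  have \<Gamma>f: "\<Gamma>f = special_aut_group M"
    by (simp add: \<Gamma>f_def \<Gamma>_def special_aut_group_def)
  have image: "perm_of ` \<Gamma>f = G"
    using perm_of_special_aut_group[OF hadamard] by (simp add: \<Gamma>f G_def \<Gamma>_def)
  have kernel: "{L \<in> \<Gamma>f. perm_of L = id} = mat ` {c. c ^ CARD('n) = 1}"
    using special_aut_group_kernel[OF hadamard] by (simp add: \<Gamma>f)
  have "{L \<in> \<Gamma>f. perm_of L = id} = {mat (\<zeta> ^ k) | k::nat. True}"
    if "primitive_root_of_unity CARD('n) \<zeta>" for \<zeta>
  proof -
    have "{c. c ^ CARD('n) = 1} = range (\<lambda>k. \<zeta> ^ k)"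
      using primitive_root_of_unity_powers[OF that] by simp
    then show ?thesis unfolding kernel by auto
  qed
  moreover have "L ** K = K ** L" if "L \<in> \<Gamma>f" "perm_of L = id" for L K
  proof -
    have "L \<in> mat ` {c. c ^ CARD('n) = 1}" using that by (simp flip: kernel)
    then obtain c where "L = mat c" by blast
    then show ?thesis by (simp add: mat_mult_commute)
  qed
  moreover have "finite \<Gamma>f \<and> card \<Gamma>f = CARD('n) * card G"
    unfolding image[symmetric] \<Gamma>f
    by (rule card_by_constant_fibres) (simp_all add: card_special_aut_group_fibre[OF hadamard])
  moreover have "M \<in> centralizer \<Gamma>"
    using aut_group_commute[OF hadamard] by (simp add: centralizer_def \<Gamma>_def)
  moreover have "centralizer \<Gamma> = centralizer \<Gamma>f"
    using centralizer_special_aut_group[OF hadamard] by (simp add: \<Gamma>f \<Gamma>_def)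
  ultimately show ?thesis using image by blast
qed

end
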